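(* Let $j\ge 1$ and consider the $j$-th flow of the type II hierarchy (defined in the context), i.e. the system $q_{t_j}=F_j[q,r]$, $r_{t_j}=G_j[q,r]$. Then this system admits the constraint $r=-\bar q$: for every smooth $q:\mathbb{R}^2\to\mathbb{C}$ one has the identity $$G_j[q,-\bar q]=-\overline{F_j[q,-\bar q]},$$ so that the constraint $r=-\bar q$ is preserved by the flow and the system reduces to a single evolution equation $q_{t_j}=F_j[q,-\bar q]$ for $q$ (for $j=2$ this is the Gerdjikov–Ivanov equation $q_t=\frac{i}{2}q_{xx}+\frac12 q^2\bar q_x+\frac{i}{4}|q|^4q$).
   Context: Let $a=\mathrm{diag}(i,-i)$. For smooth complex-valued functions $q(x,t)$, $r(x,t)$ set $u=\begin{pmatrix}0&q\\ r&0\end{pmatrix}$ and $P_0=\frac{i}{2}\begin{pmatrix}qr&0\\0&-qr\end{pmatrix}$. Consider formal series $Q=\sum_{k\le 2}Q_k\lambda^k$ in a formal parameter $\lambda$, whose coefficients $Q_k$ are traceless $2\times2$ matrices of smooth functions of $(x,t)$, with $Q_k$ diagonal for $k$ even and off-diagonal for $k$ odd. Let $Q$ be the unique such series with $Q_2=a$, $Q_1=u$, satisfying $[\partial_x+a\lambda^2+u\lambda+P_0,\;Q]=0$ (i.e. $\partial_x Q+[a\lambda^2+u\lambda+P_0,Q]=0$ coefficientwise) and $Q^2=-\lambda^4 I$; its coefficients are differential polynomials in $q,r$. The $j$-th flow of the "type II hierarchy" is $$u_{t_j}=\partial_x Q_{3-2j}+[P_0,Q_{3-2j}]+[u,Q_{2-2j}],$$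 whose right-hand side is off-diagonal, of the form $\begin{pmatrix}0&F_j[q,r]\\ G_j[q,r]&0\end{pmatrix}$ with $F_j,G_j$ differential polynomials in $q,r$; thus the flow is the system $q_{t_j}=F_j[q,r]$, $r_{t_j}=G_j[q,r]$. *)

theory Defs
  imports "HOL-Analysis.Analysis"
begin

type_synonym mat2 = "complex^2^2"

definition mk2 :: "complex \<Rightarrow> complex \<Rightarrow> complex \<Rightarrow> complex \<Rightarrow> mat2" where
  "mk2 a b c d = (\<chi> i j. if i = 1 then (if j = 1 then a else b) else (if j = 1 then c else d))"

definition comm :: "mat2 \<Rightarrow> mat2 \<Rightarrow> mat2" where
  "comm A B = A ** B - B ** A"

text \<open>Smoothness (C-infinity) of a complex function on R^2: it lies in a class of
  functions closed under taking both partial derivatives, each member being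
  (Frechet) differentiable with those partials.\<close>
definition smooth2 :: "(real \<times> real \<Rightarrow> complex) \<Rightarrow> bool" where
  "smooth2 f \<longleftrightarrow> (\<exists>S. f \<in> S \<and> (\<forall>g\<in>S. \<exists>gx\<in>S. \<exists>gt\<in>S. \<forall>z.
      (g has_derivative (\<lambda>(h,k). h *\<^sub>R gx z + k *\<^sub>R gt z)) (at z)))"

definition amat :: mat2 where "amat = mk2 \<i> 0 0 (-\<i>)"

definition umat :: "(real \<times> real \<Rightarrow> complex) \<Rightarrow> (real \<times> real \<Rightarrow> complex) \<Rightarrow> real \<times> real \<Rightarrow> mat2" where
  "umat q r z = mk2 0 (q z) (r z) 0"

definition P0mat :: "(real \<times> real \<Rightarrow> complex) \<Rightarrow> (real \<times> real \<Rightarrow> complex) \<Rightarrow> real \<times> real \<Rightarrow> mat2" where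
  "P0mat q r z = mk2 (\<i>/2 * q z * r z) 0 0 (- (\<i>/2 * q z * r z))"

definition dx :: "(real \<times> real \<Rightarrow> mat2) \<Rightarrow> real \<times> real \<Rightarrow> mat2" where
  "dx f z = vector_derivative (\<lambda>s. f (s, snd z)) (at (fst z))"

text \<open>Q k is the coefficient of lambda^k of the formal series Q = sum_(k<=2) Q_k lambda^k
  (so Q k = 0 for k > 2).  The conditions below are: traceless, parity (diagonal for even k,
  off-diagonal for odd k), Q_2 = a, Q_1 = u, the commutator equation
  d_x Q + [a lambda^2 + u lambda + P0, Q] = 0 coefficientwise (coefficient of lambda^k), and
  Q^2 = - lambda^4 I coefficientwise.\<close>
definition typeII_series ::
  "(real \<times> real \<Rightarrow> complex) \<Rightarrow> (real \<times> real \<Rightarrow> complex) \<Rightarrow> (int \<Rightarrow> real \<times> real \<Rightarrow> mat2) \<Rightarrow> bool" where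
  "typeII_series q r Q \<longleftrightarrow>
     (\<forall>k z. k > 2 \<longrightarrow> Q k z = 0) \<and>
     (\<forall>k z. Q k z $ 1 $ 1 + Q k z $ 2 $ 2 = 0) \<and>
     (\<forall>k z. even k \<longrightarrow> Q k z $ 1 $ 2 = 0 \<and> Q k z $ 2 $ 1 = 0) \<and>
     (\<forall>k z. odd k \<longrightarrow> Q k z $ 1 $ 1 = 0 \<and> Q k z $ 2 $ 2 = 0) \<and>
     (\<forall>z. Q 2 z = amat) \<and> (\<forall>z. Q 1 z = umat q r z) \<and>
     (\<forall>k x t. ((\<lambda>s. Q k (s, t)) has_vector_derivative
         - (comm amat (Q (k - 2) (x, t)) + comm (umat q r (x, t)) (Q (k - 1) (x, t))
            + comm (P0mat q r (x, t)) (Q k (x, t)))) (at x)) \<and>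
     (\<forall>k z. (\<Sum>i\<in>{k - 2..2}. Q i z ** Q (k - i) z) = (if k = 4 then - mat 1 else 0))"

definition flowRHS ::
  "(real \<times> real \<Rightarrow> complex) \<Rightarrow> (real \<times> real \<Rightarrow> complex) \<Rightarrow> (int \<Rightarrow> real \<times> real \<Rightarrow> mat2) \<Rightarrow> nat \<Rightarrow> real \<times> real \<Rightarrow> mat2" where
  "flowRHS q r Q j z = dx (Q (3 - 2 * int j)) z + comm (P0mat q r z) (Q (3 - 2 * int j) z)
      + comm (umat q r z) (Q (2 - 2 * int j) z)"

definition flowF where "flowF q r Q j z = flowRHS q r Q j z $ 1 $ 2"
definition flowG where "flowG q r Q j z = flowRHS q r Q j z $ 2 $ 1"

end

theory Submission
  imports Defs
begin

text \<open>Under \<open>r = -q\<^sup>*\<close> the matrices \<open>a\<close>, \<open>u\<close> and \<open>P\<^sub>0\<close> are anti-Hermitian, so the involution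
  \<open>M \<mapsto> -M\<^sup>*\<close> (conjugate transpose) maps a solution \<open>Q\<close> of the defining equations to another
  solution; it reverses products, and \<open>(-Q\<^sup>*)\<^sup>2 = (Q\<^sup>2)\<^sup>* = -\<lambda>\<^sup>4\<close>.  The coefficients are determined
  from the top down: an odd coefficient \<open>Q\<^sub>k\<close> by its commutator with \<open>a\<close>, read off from the
  \<open>\<lambda>\<^sup>k\<^sup>+\<^sup>2\<close> coefficient of the Lax equation, an even one by its anticommutator with \<open>a\<close>, read off from
  \<open>Q\<^sup>2 = -\<lambda>\<^sup>4\<close>.  Hence \<open>Q\<close> is anti-Hermitian.  The Lax equation at order \<open>\<lambda>\<^sup>3\<^sup>-\<^sup>2\<^sup>j\<close> turns the
  flow into \<open>u\<^sub>t = -[a, Q\<^sub>1\<^sub>-\<^sub>2\<^sub>j]\<close>, whose off-diagonal entries \<open>-2i Q\<^sub>1\<^sub>2\<close> and \<open>2i Q\<^sub>2\<^sub>1\<close> are then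
  related by \<open>G = -F\<^sup>*\<close>.\<close>

lemma mk2_nth [simp]:
  "mk2 a b c d $ 1 $ 1 = a" "mk2 a b c d $ 1 $ 2 = b"
  "mk2 a b c d $ 2 $ 1 = c" "mk2 a b c d $ 2 $ 2 = d"
  by (simp_all add: mk2_def)

lemma mat2_mult_nth [simp]: "((A::mat2) ** B) $ i $ j = A$i$1 * B$1$j + A$i$2 * B$2$j"
  by (simp add: matrix_matrix_mult_def sum_2)

lemma mat2_eq_iff: "(A::mat2) = B \<longleftrightarrow>
   A$1$1 = B$1$1 \<and> A$1$2 = B$1$2 \<and> A$2$1 = B$2$1 \<and> A$2$2 = B$2$2"
  by (auto simp: vec_eq_iff forall_2)

lemma offdiag_eq_if_comm_amat_eq:
  assumes "M$1$1 = 0" "M$2$2 = 0" "N$1$1 = 0" "N$2$2 = 0"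
    and "comm amat M = comm amat N"
  shows "M = N"
  using assms by (simp add: mat2_eq_iff comm_def amat_def)

lemma diag_traceless_eq_if_anticomm_amat_eq:
  assumes "M$1$2 = 0" "M$2$1 = 0" "M$1$1 + M$2$2 = 0"
    and "N$1$2 = 0" "N$2$1 = 0" "N$1$1 + N$2$2 = 0"
    and "M ** amat + amat ** M = N ** amat + amat ** N"
  shows "M = N"
  using assms by (simp add: mat2_eq_iff amat_def add_eq_0_iff)

definition neg_adjoint :: "mat2 \<Rightarrow> mat2" where
  "neg_adjoint M = (\<chi> i j. - cnj (M $ j $ i))"

lemma neg_adjoint_nth [simp]: "neg_adjoint M $ i $ j = - cnj (M $ j $ i)"
  by (simp add: neg_adjoint_def)

lemma linear_neg_adjoint: "linear neg_adjoint"
  by (rule linearI) (simp_all add: vec_eq_iff)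

lemma bounded_linear_neg_adjoint: "bounded_linear neg_adjoint"
  using linear_neg_adjoint linear_conv_bounded_linear by blast

lemma neg_adjoint_diff: "neg_adjoint (X - Y) = neg_adjoint X - neg_adjoint Y"
  and neg_adjoint_minus: "neg_adjoint (- X) = - neg_adjoint X"
  and neg_adjoint_zero: "neg_adjoint 0 = 0"
  and neg_adjoint_mat1: "neg_adjoint (mat 1) = - mat 1"
  by (simp_all add: mat2_eq_iff mat_def)

lemma neg_adjoint_mult: "neg_adjoint (X ** Y) = - (neg_adjoint Y ** neg_adjoint X)"
  by (simp add: mat2_eq_iff algebra_simps)

lemma neg_adjoint_comm: "neg_adjoint (comm X Y) = comm (neg_adjoint X) (neg_adjoint Y)"
  by (simp add: mat2_eq_iff comm_def algebra_simps)

lemma neg_adjoint_amat: "neg_adjoint amat = amat"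
  by (simp add: mat2_eq_iff amat_def)

lemma neg_adjoint_umat: "neg_adjoint (umat q (\<lambda>z. - cnj (q z)) z) = umat q (\<lambda>z. - cnj (q z)) z"
  by (simp add: mat2_eq_iff umat_def)

lemma neg_adjoint_P0mat: "neg_adjoint (P0mat q (\<lambda>z. - cnj (q z)) z) = P0mat q (\<lambda>z. - cnj (q z)) z"
  by (simp add: mat2_eq_iff P0mat_def)

lemma
  assumes "typeII_series q r Q"
  shows typeII_series_above_top: "2 < k \<Longrightarrow> Q k z = 0"
    and typeII_series_traceless: "Q k z $ 1 $ 1 + Q k z $ 2 $ 2 = 0"
    and typeII_series_even: "even k \<Longrightarrow> Q k z $ 1 $ 2 = 0 \<and> Q k z $ 2 $ 1 = 0"
    and typeII_series_odd: "odd k \<Longrightarrow> Q k z $ 1 $ 1 = 0 \<and> Q k z $ 2 $ 2 = 0"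
    and typeII_series_top: "Q 2 z = amat"
    and typeII_series_lax: "((\<lambda>s. Q k (s, t)) has_vector_derivative
         - (comm amat (Q (k - 2) (x, t)) + comm (umat q r (x, t)) (Q (k - 1) (x, t))
            + comm (P0mat q r (x, t)) (Q k (x, t)))) (at x)"
    and typeII_series_square:
      "(\<Sum>i\<in>{k - 2..2}. Q i z ** Q (k - i) z) = (if k = 4 then - mat 1 else 0)"
  using assms unfolding typeII_series_def by blast+

lemma typeII_series_neg_adjoint:
  assumes Q: "typeII_series q (\<lambda>z. - cnj (q z)) Q"
  shows "typeII_series q (\<lambda>z. - cnj (q z)) (\<lambda>k z. neg_adjoint (Q k z))"
proof -
  let ?r = "\<lambda>z. - cnj (q z)"
  have traceless: "neg_adjoint (Q k z) $ 1 $ 1 + neg_adjoint (Q k z) $ 2 $ 2 = 0" for k z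
    using arg_cong[OF typeII_series_traceless[OF Q, of k z], of cnj] by (simp add: add_eq_0_iff)
  have lax: "((\<lambda>s. neg_adjoint (Q k (s, t))) has_vector_derivative
         - (comm amat (neg_adjoint (Q (k - 2) (x, t)))
            + comm (umat q ?r (x, t)) (neg_adjoint (Q (k - 1) (x, t)))
            + comm (P0mat q ?r (x, t)) (neg_adjoint (Q k (x, t))))) (at x)" for k x t
    using bounded_linear.has_vector_derivative[OF bounded_linear_neg_adjoint
        typeII_series_lax[OF Q, of k t x]]
    by (simp add: neg_adjoint_diff neg_adjoint_minus neg_adjoint_comm
        neg_adjoint_amat neg_adjoint_umat neg_adjoint_P0mat)
  have square: "(\<Sum>i\<in>{k - 2..2}. neg_adjoint (Q i z) ** neg_adjoint (Q (k - i) z))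
      = (if k = 4 then - mat 1 else 0)" for k z
  proof -
    have "(\<Sum>i\<in>{k - 2..2}. neg_adjoint (Q i z) ** neg_adjoint (Q (k - i) z))
        = - neg_adjoint (\<Sum>i\<in>{k - 2..2}. Q (k - i) z ** Q i z)"
      by (simp add: neg_adjoint_mult linear_sum[OF linear_neg_adjoint] sum_negf)
    also have "(\<Sum>i\<in>{k - 2..2}. Q (k - i) z ** Q i z) = (\<Sum>i\<in>{k - 2..2}. Q i z ** Q (k - i) z)"
      by (rule sum.reindex_bij_witness[of _ "\<lambda>i. k - i" "\<lambda>i. k - i"]) auto
    finally show ?thesis
      by (simp add: typeII_series_square[OF Q] neg_adjoint_minus neg_adjoint_mat1 neg_adjoint_zero)
  qed
  show ?thesis
    unfolding typeII_series_def
    using traceless lax square typeII_series_above_top[OF Q] typeII_series_even[OF Q]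
      typeII_series_odd[OF Q] typeII_series_top[OF Q] Q[unfolded typeII_series_def]
    by (simp add: neg_adjoint_zero neg_adjoint_amat neg_adjoint_umat)
qed

lemma typeII_series_comm_amat_determined:
  assumes Q: "typeII_series q r Q" and R: "typeII_series q r R"
    and above: "\<And>i. k < i \<Longrightarrow> Q i = R i"
  shows "comm amat (Q k z) = comm amat (R k z)"
proof -
  obtain x t where z: "z = (x, t)" by (cases z)
  have index: "k + 2 - 2 = k" "k + 2 - 1 = k + 1" by simp_all
  note lax_Q = typeII_series_lax[OF Q, where k = "k + 2" and x = x and t = t, unfolded index]
  note lax_R = typeII_series_lax[OF R, where k = "k + 2" and x = x and t = t, unfolded index]
  have "Q (k + 1) = R (k + 1)" "Q (k + 2) = R (k + 2)" by (simp_all add: above)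
  with lax_Q lax_R show ?thesis
    unfolding z by (metis vector_derivative_unique_at add_right_imp_eq neg_equal_iff_equal)
qed

lemma typeII_series_anticomm_amat_determined:
  assumes Q: "typeII_series q r Q" and R: "typeII_series q r R"
    and above: "\<And>i. k < i \<Longrightarrow> Q i = R i" and "k < 2"
  shows "Q k z ** amat + amat ** Q k z = R k z ** amat + amat ** R k z"
proof -
  have split: "{k..2} = insert k (insert 2 {k + 1..1})"
    and fresh: "k \<notin> insert 2 {k + 1..1}" "2 \<notin> {k + 1..(1::int)}"
    using \<open>k < 2\<close> by auto
  have middle: "(\<Sum>i\<in>{k + 1..1}. Q i z ** Q (k + 2 - i) z)
      = (\<Sum>i\<in>{k + 1..1}. R i z ** R (k + 2 - i) z)"
    by (rule sum.cong) (auto simp: above)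
  have "(\<Sum>i\<in>{k..2}. Q i z ** Q (k + 2 - i) z) = (\<Sum>i\<in>{k..2}. R i z ** R (k + 2 - i) z)"
    using typeII_series_square[OF Q, where k = "k + 2" and z = z]
      typeII_series_square[OF R, where k = "k + 2" and z = z]
    by simp
  then show ?thesis
    unfolding split using fresh middle typeII_series_top[OF Q] typeII_series_top[OF R]
    by (simp add: add.assoc)
qed

lemma typeII_series_unique:
  assumes Q: "typeII_series q r Q" and R: "typeII_series q r R"
  shows "Q = R"
proof -
  have agree_from: "Q k = R k" if "3 - int n \<le> k" for n k
    using that
  proof (induction n arbitrary: k)
    case 0
    then show ?case
      by (auto simp: typeII_series_above_top[OF Q] typeII_series_above_top[OF R])
  next
    case (Suc n)
    show ?case
    proof (cases "3 - int n \<le> k")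
      case True
      then show ?thesis by (rule Suc.IH)
    next
      case False
      with Suc.prems have k: "k = 2 - int n" by simp
      have above: "Q i = R i" if "k < i" for i
        using Suc.IH that k by simp
      show ?thesis
      proof
        fix z
        consider "k = 2" | "k < 2" "even k" | "odd k"
          using k by (cases "n = 0") auto
        then show "Q k z = R k z"
        proof cases
          case 1
          then show ?thesis by (simp add: typeII_series_top[OF Q] typeII_series_top[OF R])
        next
          case 2
          have "Q k z ** amat + amat ** Q k z = R k z ** amat + amat ** R k z"
            using typeII_series_anticomm_amat_determined[OF Q R above \<open>k < 2\<close>] .
          then show ?thesis
            using typeII_series_even[OF Q \<open>even k\<close>, where z = z]
              typeII_series_even[OF R \<open>even k\<close>, where z = z]
              typeII_series_traceless[OF Q, where k = k and z = z]
              typeII_series_traceless[OF R, where k = k and z = z]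
            by (blast intro: diag_traceless_eq_if_anticomm_amat_eq)
        next
          case 3
          have "comm amat (Q k z) = comm amat (R k z)"
            using typeII_series_comm_amat_determined[OF Q R above] .
          then show ?thesis
            using typeII_series_odd[OF Q \<open>odd k\<close>, where z = z]
              typeII_series_odd[OF R \<open>odd k\<close>, where z = z]
            by (blast intro: offdiag_eq_if_comm_amat_eq)
        qed
      qed
    qed
  qed
  show ?thesis
  proof
    fix k
    show "Q k = R k"
      by (rule agree_from[of "nat (3 - k)"]) simp
  qed
qed

lemma typeII_series_anti_hermitian:
  assumes "typeII_series q (\<lambda>z. - cnj (q z)) Q"
  shows "neg_adjoint (Q k z) = Q k z"
  using typeII_series_unique[OF typeII_series_neg_adjoint[OF assms] assms] by metis

lemma flowRHS_eq_comm_amat: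
  assumes "typeII_series q r Q"
  shows "flowRHS q r Q j z = - comm amat (Q (1 - 2 * int j) z)"
proof -
  obtain x t where z: "z = (x, t)" by (cases z)
  have "dx (Q (3 - 2 * int j)) z
      = - (comm amat (Q (1 - 2 * int j) z) + comm (umat q r z) (Q (2 - 2 * int j) z)
           + comm (P0mat q r z) (Q (3 - 2 * int j) z))"
    using vector_derivative_at[OF typeII_series_lax[OF assms, of "3 - 2 * int j" t x]]
    by (simp add: dx_def z)
  then show ?thesis
    by (simp add: flowRHS_def algebra_simps)
qed

theorem mainTheorem1:
  fixes q :: "real \<times> real \<Rightarrow> complex" and j :: nat
    and Q :: "int \<Rightarrow> real \<times> real \<Rightarrow> complex^2^2"
  assumes "j \<ge> 1"
    and "smooth2 q"
    and "typeII_series q (\<lambda>z. - cnj (q z)) Q"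
  shows "\<forall>z. flowG q (\<lambda>z. - cnj (q z)) Q j z = - cnj (flowF q (\<lambda>z. - cnj (q z)) Q j z)"
proof
  fix z
  define M where "M = Q (1 - 2 * int j) z"
  have "M $ 2 $ 1 = - cnj (M $ 1 $ 2)"
    using typeII_series_anti_hermitian[OF assms(3), of "1 - 2 * int j" z]
    unfolding M_def by (metis neg_adjoint_nth)
  then show "flowG q (\<lambda>z. - cnj (q z)) Q j z = - cnj (flowF q (\<lambda>z. - cnj (q z)) Q j z)"
    unfolding flowG_def flowF_def flowRHS_eq_comm_amat[OF assms(3)] M_def[symmetric]
    by (simp add: comm_def amat_def)
qed

end
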